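(* Let $R$ be the ring of integers of a nonarchimedean local field of characteristic not $2$ in which $2$ is a prime element, and let $\ell$ be an even $R$-lattice of rank $n\ge1$. If $J$ is an $R$-lattice such that $Q^\ast(\ell)\cap Q^\ast(J)\ne\varnothing$, then $\ell$ is primitively represented by $\mathbb{H}^{n-1}\perp J$.
   Context: An $R$-lattice is a finitely generated $R$-submodule of a quadratic space $(V,B)$ over $F$ with $Q(v)=B(v,v)$, assumed integral ($B(L,L)\subseteq R$) and nondegenerate; it is even if $Q(L)\subseteq 2R$. $Q^\ast(L)=\{Q(v): v\in L\text{ primitive}\}$, where $v$ is primitive if $Rv$ is a direct summand of $L$. A representation is an $R$-linear map preserving $B$, primitive if its image is a direct summand. $\mathbb{H}$ is the binary lattice with Gram matrix $\begin{pmatrix}0&1\\1&0\end{pmatrix}$ and $\mathbb{H}^{k}$ the orthogonal sum of $k$ copies ($\mathbb{H}^0=0$). *)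

theory Defs
  imports Main
begin

text \<open>R is the valuation ring of a discrete valuation v on the field 'a
(the local field F) with v 2 = 1 (so 2 is a prime element / uniformizer and
char F is not 2), F complete for v, and residue field R/2R finite.\<close>

definition is_dvaluation :: "('a::field \<Rightarrow> int) \<Rightarrow> bool" where
  "is_dvaluation v \<longleftrightarrow>
     (\<forall>x y. x \<noteq> 0 \<longrightarrow> y \<noteq> 0 \<longrightarrow> v (x * y) = v x + v y) \<and>
     (\<forall>x y. x \<noteq> 0 \<longrightarrow> y \<noteq> 0 \<longrightarrow> x + y \<noteq> 0 \<longrightarrow> v (x + y) \<ge> min (v x) (v y))"

definition v_cauchy :: "('a::field \<Rightarrow> int) \<Rightarrow> (nat \<Rightarrow> 'a) \<Rightarrow> bool" where
  "v_cauchy v s \<longleftrightarrow> (\<forall>N::int. \<exists>M. \<forall>m\<ge>M. \<forall>k\<ge>M. s m = s k \<or> v (s m - s k) \<ge> N)"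

definition v_converges :: "('a::field \<Rightarrow> int) \<Rightarrow> (nat \<Rightarrow> 'a) \<Rightarrow> 'a \<Rightarrow> bool" where
  "v_converges v s L \<longleftrightarrow> (\<forall>N::int. \<exists>M. \<forall>m\<ge>M. s m = L \<or> v (s m - L) \<ge> N)"

definition dyadic_local_int_ring :: "'a::field set \<Rightarrow> bool" where
  "dyadic_local_int_ring R \<longleftrightarrow>
     (\<exists>v::'a \<Rightarrow> int.
        is_dvaluation v \<and>
        (2::'a) \<noteq> 0 \<and> v 2 = 1 \<and>
        R = {x. x = 0 \<or> v x \<ge> 0} \<and>
        (\<forall>s. v_cauchy v s \<longrightarrow> (\<exists>L. v_converges v s L)) \<and>
        (\<exists>S. finite S \<and> S \<subseteq> R \<and> (\<forall>x\<in>R. \<exists>y\<in>S. x - y \<in> {2 * r | r. r \<in> R})))"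

text \<open>Since R is a PID, every R-lattice is free; a lattice of rank k is
modelled (up to isometry) as R^k with a Gram matrix G (indices < k).\<close>

definition vecs :: "'a::field set \<Rightarrow> nat \<Rightarrow> (nat \<Rightarrow> 'a) set" where
  "vecs A k = {x. (\<forall>i<k. x i \<in> A) \<and> (\<forall>i\<ge>k. x i = 0)}"

definition bil :: "nat \<Rightarrow> (nat \<Rightarrow> nat \<Rightarrow> 'a::field) \<Rightarrow> (nat \<Rightarrow> 'a) \<Rightarrow> (nat \<Rightarrow> 'a) \<Rightarrow> 'a" where
  "bil k G x y = (\<Sum>i<k. \<Sum>j<k. x i * G i j * y j)"

definition Qf :: "nat \<Rightarrow> (nat \<Rightarrow> nat \<Rightarrow> 'a::field) \<Rightarrow> (nat \<Rightarrow> 'a) \<Rightarrow> 'a" where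
  "Qf k G x = bil k G x x"

definition is_lattice :: "'a::field set \<Rightarrow> nat \<Rightarrow> (nat \<Rightarrow> nat \<Rightarrow> 'a) \<Rightarrow> bool" where
  "is_lattice R k G \<longleftrightarrow>
     (\<forall>i<k. \<forall>j<k. G i j = G j i) \<and>
     (\<forall>x\<in>vecs R k. \<forall>y\<in>vecs R k. bil k G x y \<in> R) \<and>
     (\<forall>x\<in>vecs UNIV k. (\<forall>y\<in>vecs UNIV k. bil k G x y = 0) \<longrightarrow> x = (\<lambda>_. 0))"

definition even_lattice :: "'a::field set \<Rightarrow> nat \<Rightarrow> (nat \<Rightarrow> nat \<Rightarrow> 'a) \<Rightarrow> bool" where
  "even_lattice R k G \<longleftrightarrow> (\<forall>x\<in>vecs R k. Qf k G x \<in> {2 * r | r. r \<in> R})"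

definition submod :: "'a::field set \<Rightarrow> nat \<Rightarrow> (nat \<Rightarrow> 'a) set \<Rightarrow> bool" where
  "submod R k M \<longleftrightarrow> M \<subseteq> vecs R k \<and> (\<lambda>_. 0) \<in> M \<and>
     (\<forall>x\<in>M. \<forall>y\<in>M. (\<lambda>i. x i + y i) \<in> M) \<and>
     (\<forall>r\<in>R. \<forall>x\<in>M. (\<lambda>i. r * x i) \<in> M)"

definition direct_summand :: "'a::field set \<Rightarrow> nat \<Rightarrow> (nat \<Rightarrow> 'a) set \<Rightarrow> bool" where
  "direct_summand R k M \<longleftrightarrow> submod R k M \<and>
     (\<exists>N. submod R k N \<and> M \<inter> N = {\<lambda>_. 0} \<and>
          vecs R k = {(\<lambda>i. x i + y i) | x y. x \<in> M \<and> y \<in> N})"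

definition primitive_vec :: "'a::field set \<Rightarrow> nat \<Rightarrow> (nat \<Rightarrow> 'a) \<Rightarrow> bool" where
  "primitive_vec R k x \<longleftrightarrow> x \<in> vecs R k \<and> x \<noteq> (\<lambda>_. 0) \<and>
     direct_summand R k {(\<lambda>i. r * x i) | r. r \<in> R}"

definition Qstar :: "'a::field set \<Rightarrow> nat \<Rightarrow> (nat \<Rightarrow> nat \<Rightarrow> 'a) \<Rightarrow> 'a set" where
  "Qstar R k G = {Qf k G x | x. primitive_vec R k x}"

definition prim_repr :: "'a::field set \<Rightarrow> nat \<Rightarrow> (nat \<Rightarrow> nat \<Rightarrow> 'a) \<Rightarrow> nat \<Rightarrow> (nat \<Rightarrow> nat \<Rightarrow> 'a)
     \<Rightarrow> ((nat \<Rightarrow> 'a) \<Rightarrow> (nat \<Rightarrow> 'a)) \<Rightarrow> bool" where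
  "prim_repr R n G m H \<sigma> \<longleftrightarrow>
     (\<forall>x\<in>vecs R n. \<sigma> x \<in> vecs R m) \<and>
     (\<forall>x\<in>vecs R n. \<forall>y\<in>vecs R n. \<sigma> (\<lambda>i. x i + y i) = (\<lambda>i. \<sigma> x i + \<sigma> y i)) \<and>
     (\<forall>r\<in>R. \<forall>x\<in>vecs R n. \<sigma> (\<lambda>i. r * x i) = (\<lambda>i. r * \<sigma> x i)) \<and>
     (\<forall>x\<in>vecs R n. \<forall>y\<in>vecs R n. bil m H (\<sigma> x) (\<sigma> y) = bil n G x y) \<and>
     direct_summand R m (\<sigma> ` vecs R n)"

text \<open>Gram matrix of H^k \<perp> J (J of rank kJ with Gram matrix GJ); rank 2k + kJ.\<close>
definition hyp_sum :: "nat \<Rightarrow> (nat \<Rightarrow> nat \<Rightarrow> 'a::field) \<Rightarrow> nat \<Rightarrow> nat \<Rightarrow> 'a" where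
  "hyp_sum k GJ i j =
     (if i < 2 * k \<and> j < 2 * k then (if i div 2 = j div 2 \<and> i \<noteq> j then 1 else 0)
      else if 2 * k \<le> i \<and> 2 * k \<le> j then GJ (i - 2 * k) (j - 2 * k) else 0)"

end

theory Submission
  imports Defs
begin

(*
  Let x \<in> L and y \<in> J be primitive with Q x = Q y. Over a discrete valuation ring a primitive
  vector has a unit coordinate x_k, so L = R x \<oplus> L', where L' is spanned by the other basis
  vectors e_i. As L is even, its Gram matrix is G = U + U^T with U upper triangular and integral
  (the diagonal of U is G_ii / 2). Write v = c x + p with p \<in> L' and send v to the vector of
  H^(n-1) \<perp> J whose i-th hyperbolic pair (i \<noteq> k) is (p_i, U(p, e_i) + c B(x, e_i)) and
  whose J-component is c y. The form of two such images is
  U(p, p') + U(p', p) + c' B(p, x) + c B(x, p') + c c' Q y, which is B(v, v') because Q y = Q x.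
  The image is a direct summand: the vectors vanishing at the first entry of every pair and at
  a unit coordinate of y form a complement.
*)

lemma bil_add_left: "bil k G (\<lambda>i. a i + b i) c = bil k G a c + bil k G b c"
  by (simp add: bil_def algebra_simps sum.distrib)

lemma bil_add_right: "bil k G a (\<lambda>i. b i + c i) = bil k G a b + bil k G a c"
  by (simp add: bil_def algebra_simps sum.distrib)

lemma bil_scale_left: "bil k G (\<lambda>i. r * a i) b = r * bil k G a b"
  by (simp add: bil_def sum_distrib_left algebra_simps)

lemma bil_scale_right: "bil k G a (\<lambda>i. r * b i) = r * bil k G a b"
  by (simp add: bil_def sum_distrib_left algebra_simps)

lemma bil_cong:
  "(\<And>i. i < k \<Longrightarrow> a i = a' i) \<Longrightarrow> (\<And>i. i < k \<Longrightarrow> b i = b' i) \<Longrightarrow>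
    bil k G a b = bil k G a' b'"
  unfolding bil_def by (intro sum.cong) auto

lemma bil_gram_cong:
  "(\<And>i j. i < k \<Longrightarrow> j < k \<Longrightarrow> G i j = H i j) \<Longrightarrow> bil k G a b = bil k H a b"
  unfolding bil_def by (intro sum.cong) auto

lemma bil_gram_add: "bil k G a b + bil k H a b = bil k (\<lambda>i j. G i j + H i j) a b"
  by (simp add: bil_def algebra_simps sum.distrib)

lemma bil_swap: "bil k G b a = bil k (\<lambda>i j. G j i) a b"
  unfolding bil_def by (subst sum.swap) (simp add: mult_ac)

lemma bil_commute: "\<forall>i<k. \<forall>j<k. G i j = G j i \<Longrightarrow> bil k G a b = bil k G b a"
  using bil_swap[of k G a b] bil_gram_cong[of k "\<lambda>i j. G j i" G] by simp

definition unit_vec :: "nat \<Rightarrow> nat \<Rightarrow> 'a::zero_neq_one" where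
  "unit_vec i = (\<lambda>j. if j = i then 1 else 0)"

lemma bil_unit_vec_right: "l < k \<Longrightarrow> bil k G a (unit_vec l) = (\<Sum>i<k. a i * G i l)"
  unfolding bil_def unit_vec_def by (simp add: if_distrib[of "\<lambda>x. _ * x"] sum.delta cong: if_cong)

lemma bil_unit_vec: "i < k \<Longrightarrow> l < k \<Longrightarrow> bil k G (unit_vec i) (unit_vec l) = G i l"
  by (simp add: bil_unit_vec_right)
    (simp add: unit_vec_def if_distrib[of "\<lambda>x. x * _"] sum.delta cong: if_cong)

lemma bil_eq_sum_unit_vec: "bil k G a b = (\<Sum>l<k. bil k G a (unit_vec l) * b l)"
proof -
  have "(\<Sum>l<k. bil k G a (unit_vec l) * b l) = (\<Sum>l<k. \<Sum>i<k. a i * G i l * b l)"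
    by (intro sum.cong) (simp_all add: bil_unit_vec_right sum_distrib_right)
  also have "\<dots> = bil k G a b"
    unfolding bil_def by (rule sum.swap)
  finally show ?thesis ..
qed

definition half_gram :: "(nat \<Rightarrow> nat \<Rightarrow> 'a::field) \<Rightarrow> nat \<Rightarrow> nat \<Rightarrow> 'a" where
  "half_gram G i j = (if i < j then G i j else if i = j then G i i / 2 else 0)"

lemma bil_half_gram:
  fixes G :: "nat \<Rightarrow> nat \<Rightarrow> 'a::field"
  assumes "(2::'a) \<noteq> 0" and "\<forall>i<k. \<forall>j<k. G i j = G j i"
  shows "bil k (half_gram G) a b + bil k (half_gram G) b a = bil k G a b"
proof -
  have "bil k (half_gram G) a b + bil k (half_gram G) b a =
      bil k (\<lambda>i j. half_gram G i j + half_gram G j i) a b"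
    unfolding bil_swap[of k _ b a] by (rule bil_gram_add)
  also have "\<dots> = bil k G a b"
  proof (rule bil_gram_cong)
    fix i j assume "i < k" "j < k"
    consider "i < j" | "i = j" | "j < i" by linarith
    then show "half_gram G i j + half_gram G j i = G i j"
      by cases (use assms \<open>i < k\<close> \<open>j < k\<close> in
          \<open>simp_all add: half_gram_def flip: add_divide_distrib mult_2\<close>)
  qed
  finally show ?thesis .
qed

lemma sum_lessThan_add:
  fixes f :: "nat \<Rightarrow> 'a::comm_monoid_add" and m j :: nat
  shows "(\<Sum>i<m + j. f i) = (\<Sum>i<m. f i) + (\<Sum>i<j. f (m + i))"
  by (induction j) (simp_all add: ac_simps)

lemma sum_lessThan_double:
  fixes f :: "nat \<Rightarrow> 'a::comm_monoid_add" and m :: nat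
  shows "(\<Sum>i<2 * m. f i) = (\<Sum>j<m. f (2 * j) + f (2 * j + 1))"
  by (induction m) (simp_all add: ac_simps)

lemma hyp_sum_pairs:
  "j < m \<Longrightarrow> j' < m \<Longrightarrow> hyp_sum m GJ (2 * j) (2 * j') = 0"
  "j < m \<Longrightarrow> j' < m \<Longrightarrow> hyp_sum m GJ (Suc (2 * j)) (Suc (2 * j')) = 0"
  "j < m \<Longrightarrow> j' < m \<Longrightarrow> hyp_sum m GJ (2 * j) (Suc (2 * j')) = (if j = j' then 1 else 0)"
  "j < m \<Longrightarrow> j' < m \<Longrightarrow> hyp_sum m GJ (Suc (2 * j)) (2 * j') = (if j = j' then 1 else 0)"
  by (auto simp: hyp_sum_def)

lemma hyp_sum_blocks:
  "a < 2 * m \<Longrightarrow> hyp_sum m GJ a (2 * m + i) = 0"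
  "b < 2 * m \<Longrightarrow> hyp_sum m GJ (2 * m + i) b = 0"
  "hyp_sum m GJ (2 * m + i) (2 * m + l) = GJ i l"
  by (auto simp: hyp_sum_def)

lemma bil_hyp_sum:
  "bil (2 * m + kJ) (hyp_sum m GJ) s t =
     (\<Sum>j<m. s (2 * j) * t (2 * j + 1) + s (2 * j + 1) * t (2 * j)) +
     bil kJ GJ (\<lambda>i. s (2 * m + i)) (\<lambda>i. t (2 * m + i))"
  unfolding bil_def sum_lessThan_add sum_lessThan_double
  by (simp add: hyp_sum_pairs hyp_sum_blocks sum.distrib sum.delta
      if_distrib[of "\<lambda>x. _ * x"] if_distrib[of "\<lambda>x. x * _"] cong: if_cong sum.cong_simp)

definition hyp_vec ::
    "nat \<Rightarrow> nat \<Rightarrow> (nat \<Rightarrow> 'a) \<Rightarrow> (nat \<Rightarrow> 'a) \<Rightarrow> (nat \<Rightarrow> 'a) \<Rightarrow> nat \<Rightarrow> 'a::zero" where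
  "hyp_vec m kJ f g z a =
    (if a < 2 * m then (if even a then f (a div 2) else g (a div 2))
     else if a < 2 * m + kJ then z (a - 2 * m) else 0)"

lemma hyp_vec_even [simp]: "j < m \<Longrightarrow> hyp_vec m kJ f g z (2 * j) = f j"
  and hyp_vec_odd [simp]: "j < m \<Longrightarrow> hyp_vec m kJ f g z (Suc (2 * j)) = g j"
  and hyp_vec_tail [simp]: "i < kJ \<Longrightarrow> hyp_vec m kJ f g z (2 * m + i) = z i"
  by (simp_all add: hyp_vec_def)

lemma bil_hyp_vec:
  "bil (2 * m + kJ) (hyp_sum m GJ) (hyp_vec m kJ f g z) (hyp_vec m kJ f' g' z') =
     (\<Sum>j<m. f j * g' j + g j * f' j) + bil kJ GJ z z'"
proof -
  have "bil kJ GJ (\<lambda>i. hyp_vec m kJ f g z (2 * m + i)) (\<lambda>i. hyp_vec m kJ f' g' z' (2 * m + i)) =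
      bil kJ GJ z z'"
    by (rule bil_cong) simp_all
  then show ?thesis
    unfolding bil_hyp_sum by (simp cong: sum.cong_simp)
qed

definition skip :: "nat \<Rightarrow> nat \<Rightarrow> nat" where
  "skip k j = (if j < k then j else Suc j)"

definition unskip :: "nat \<Rightarrow> nat \<Rightarrow> nat" where
  "unskip k i = (if i < k then i else i - 1)"

lemma skip_neq [simp]: "skip k j \<noteq> k"
  and unskip_skip [simp]: "unskip k (skip k j) = j"
  and skip_unskip: "i \<noteq> k \<Longrightarrow> skip k (unskip k i) = i"
  by (auto simp: skip_def unskip_def)

lemma skip_less: "k < n \<Longrightarrow> j < n - 1 \<Longrightarrow> skip k j < n"
  and unskip_less: "k < n \<Longrightarrow> i < n \<Longrightarrow> i \<noteq> k \<Longrightarrow> unskip k i < n - 1"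
  by (auto simp: skip_def unskip_def)

lemma bij_betw_skip: "k < n \<Longrightarrow> bij_betw (skip k) {..<n - 1} ({..<n} - {k})"
  by (rule bij_betw_byWitness[where f' = "unskip k"]) (auto simp: skip_def unskip_def)

lemma sum_skip:
  assumes "k < n" "g k = 0"
  shows "(\<Sum>j<n - 1. g (skip k j)) = (\<Sum>i<n. g i)"
proof -
  have "(\<Sum>j<n - 1. g (skip k j)) = (\<Sum>i\<in>{..<n} - {k}. g i)"
    using sum.reindex_bij_betw[OF bij_betw_skip[OF assms(1)]] .
  also have "\<dots> = (\<Sum>i<n. g i)"
    using assms by (intro sum.mono_neutral_left) auto
  finally show ?thesis .
qed

locale discrete_valuation_ring =
  fixes R :: "'a::field set" and val :: "'a \<Rightarrow> int"
  assumes is_dvaluation: "is_dvaluation val"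
    and R_eq: "R = {a. a = 0 \<or> 0 \<le> val a}"
begin

lemma val_mult: "a \<noteq> 0 \<Longrightarrow> b \<noteq> 0 \<Longrightarrow> val (a * b) = val a + val b"
  using is_dvaluation unfolding is_dvaluation_def by blast

lemma val_add: "a \<noteq> 0 \<Longrightarrow> b \<noteq> 0 \<Longrightarrow> a + b \<noteq> 0 \<Longrightarrow> min (val a) (val b) \<le> val (a + b)"
  using is_dvaluation unfolding is_dvaluation_def by blast

lemma val_one: "val 1 = 0"
  using val_mult[of 1 1] by simp

lemma val_minus_one: "val (- 1) = 0"
  using val_mult[of "- 1" "- 1"] val_one by simp

lemma val_inverse: "a \<noteq> 0 \<Longrightarrow> val (inverse a) = - val a"
  using val_mult[of a "inverse a"] val_one by simp

lemma mem_R_iff: "a \<in> R \<longleftrightarrow> a = 0 \<or> 0 \<le> val a"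
  using R_eq by simp

lemma zero_mem [simp]: "0 \<in> R" and one_mem [simp]: "1 \<in> R"
  by (simp_all add: mem_R_iff val_one)

lemma mult_mem [simp]: "a \<in> R \<Longrightarrow> b \<in> R \<Longrightarrow> a * b \<in> R"
  by (cases "a = 0 \<or> b = 0") (auto simp: mem_R_iff val_mult)

lemma uminus_mem [simp]: "a \<in> R \<Longrightarrow> - a \<in> R"
  using mult_mem[of "- 1" a] by (simp add: mem_R_iff val_minus_one)

lemma add_mem [simp]: "a \<in> R \<Longrightarrow> b \<in> R \<Longrightarrow> a + b \<in> R"
  using val_add[of a b] by (cases "a = 0 \<or> b = 0 \<or> a + b = 0") (auto simp: mem_R_iff)

lemma diff_mem [simp]: "a \<in> R \<Longrightarrow> b \<in> R \<Longrightarrow> a - b \<in> R"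
  using add_mem[of a "- b"] by simp

lemma sum_mem: "(\<And>i. i \<in> A \<Longrightarrow> f i \<in> R) \<Longrightarrow> sum f A \<in> R"
  by (induction A rule: infinite_finite_induct) auto

lemma divide_mem: "b \<noteq> 0 \<Longrightarrow> a = 0 \<or> val b \<le> val a \<Longrightarrow> a / b \<in> R"
  by (cases "a = 0") (auto simp: mem_R_iff divide_inverse val_mult val_inverse)

lemma vecs_mem: "v \<in> vecs R m \<Longrightarrow> v i \<in> R"
  unfolding vecs_def by (cases "i < m") auto

lemma vecs_add: "v \<in> vecs R m \<Longrightarrow> w \<in> vecs R m \<Longrightarrow> (\<lambda>i. v i + w i) \<in> vecs R m"
  unfolding vecs_def by auto

lemma vecs_scale: "c \<in> R \<Longrightarrow> v \<in> vecs R m \<Longrightarrow> (\<lambda>i. c * v i) \<in> vecs R m"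
  unfolding vecs_def by auto

lemma vecs_diff: "v \<in> vecs R m \<Longrightarrow> w \<in> vecs R m \<Longrightarrow> (\<lambda>i. v i - w i) \<in> vecs R m"
  unfolding vecs_def by auto

lemma vecs_zero: "(\<lambda>_. 0) \<in> vecs R m"
  unfolding vecs_def by auto

lemma bil_mem:
  "(\<And>i j. i < k \<Longrightarrow> j < k \<Longrightarrow> G i j \<in> R) \<Longrightarrow> a \<in> vecs R k \<Longrightarrow> b \<in> vecs R k \<Longrightarrow>
    bil k G a b \<in> R"
  unfolding bil_def by (auto intro!: sum_mem simp: vecs_mem)

lemma unit_vec_vecs: "i < k \<Longrightarrow> unit_vec i \<in> vecs R k"
  unfolding unit_vec_def vecs_def by auto

lemma lattice_gram_mem:
  assumes "is_lattice R k G" "i < k" "j < k"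
  shows "G i j \<in> R"
  using assms bil_unit_vec[OF assms(2,3)] unit_vec_vecs unfolding is_lattice_def by metis

lemma even_lattice_half_diag_mem:
  assumes "even_lattice R k G" "(2::'a) \<noteq> 0" "i < k"
  shows "G i i / 2 \<in> R"
proof -
  obtain r where "r \<in> R" "Qf k G (unit_vec i) = 2 * r"
    using assms(1) unit_vec_vecs[OF assms(3)] unfolding even_lattice_def by blast
  then show ?thesis using assms(2,3) by (simp add: Qf_def bil_unit_vec)
qed

lemma hyp_vec_vecs:
  assumes "\<And>j. j < m \<Longrightarrow> f j \<in> R" "\<And>j. j < m \<Longrightarrow> g j \<in> R" "\<And>i. i < kJ \<Longrightarrow> z i \<in> R"
  shows "hyp_vec m kJ f g z \<in> vecs R (2 * m + kJ)"
proof -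
  have "a < 2 * m \<Longrightarrow> a div 2 < m" for a by linarith
  then show ?thesis using assms unfolding vecs_def hyp_vec_def by auto
qed

lemma submod_image:
  assumes vecs: "\<And>v. v \<in> vecs R n \<Longrightarrow> \<sigma> v \<in> vecs R m"
    and add: "\<And>v w. \<sigma> (\<lambda>i. v i + w i) = (\<lambda>i. \<sigma> v i + \<sigma> w i)"
    and scale: "\<And>c v. \<sigma> (\<lambda>i. c * v i) = (\<lambda>i. c * \<sigma> v i)"
  shows "submod R m (\<sigma> ` vecs R n)"
  unfolding submod_def
proof (intro conjI ballI)
  show "\<sigma> ` vecs R n \<subseteq> vecs R m" using vecs by blast
  have "\<sigma> (\<lambda>_. 0) = (\<lambda>_. 0)" using scale[of 0 "\<lambda>_. 0"] by simp
  then show "(\<lambda>_. 0) \<in> \<sigma> ` vecs R n" using vecs_zero by (metis image_eqI)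
next
  fix a b assume "a \<in> \<sigma> ` vecs R n" "b \<in> \<sigma> ` vecs R n"
  then obtain v w where "v \<in> vecs R n" "w \<in> vecs R n" "a = \<sigma> v" "b = \<sigma> w" by blast
  then show "(\<lambda>i. a i + b i) \<in> \<sigma> ` vecs R n"
    using add[of v w] vecs_add[of v n w] by (metis image_eqI)
next
  fix c a assume "c \<in> R" "a \<in> \<sigma> ` vecs R n"
  then obtain v where "v \<in> vecs R n" "a = \<sigma> v" by blast
  then show "(\<lambda>i. c * a i) \<in> \<sigma> ` vecs R n"
    using scale[of c v] vecs_scale[OF \<open>c \<in> R\<close>, of v n] by (metis image_eqI)
qed

lemma primitive_vec_not_divisible:
  assumes x: "primitive_vec R m x" and "\<pi> \<noteq> 0" "0 < val \<pi>"
  shows "(\<lambda>i. x i / \<pi>) \<notin> vecs R m"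
proof
  assume "(\<lambda>i. x i / \<pi>) \<in> vecs R m"
  obtain N where N: "submod R m N" "{(\<lambda>i. r * x i) | r. r \<in> R} \<inter> N = {\<lambda>_. 0}"
      and "vecs R m = {(\<lambda>i. a i + b i) | a b. a \<in> {(\<lambda>i. r * x i) | r. r \<in> R} \<and> b \<in> N}"
    using x unfolding primitive_vec_def direct_summand_def by blast
  then obtain s b where s: "s \<in> R" and "b \<in> N"
    and split: "(\<lambda>i. x i / \<pi>) = (\<lambda>i. s * x i + b i)"
    using \<open>(\<lambda>i. x i / \<pi>) \<in> vecs R m\<close> by blast
  have \<pi>: "\<pi> \<in> R" using \<open>0 < val \<pi>\<close> by (simp add: mem_R_iff)
  have "(\<lambda>i. (1 - \<pi> * s) * x i) = (\<lambda>i. \<pi> * b i)"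
  proof
    fix i show "(1 - \<pi> * s) * x i = \<pi> * b i"
      using fun_cong[OF split, of i] \<open>\<pi> \<noteq> 0\<close> by (simp add: field_simps)
  qed
  moreover have "(\<lambda>i. \<pi> * b i) \<in> N"
    using N(1) \<open>b \<in> N\<close> \<pi> unfolding submod_def by blast
  moreover have "(\<lambda>i. (1 - \<pi> * s) * x i) \<in> {(\<lambda>i. r * x i) | r. r \<in> R}"
    using s \<pi> by auto
  ultimately have "(\<lambda>i. (1 - \<pi> * s) * x i) = (\<lambda>_. 0)"
    using N(2) by auto
  moreover have "1 - \<pi> * s \<noteq> 0"
  proof
    assume "1 - \<pi> * s = 0"
    then have "val (\<pi> * s) = 0" "s \<noteq> 0" using val_one by auto
    then show False
      using val_mult[of \<pi> s] s \<open>\<pi> \<noteq> 0\<close> \<open>0 < val \<pi>\<close> by (simp add: mem_R_iff)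
  qed
  ultimately have "x = (\<lambda>_. 0)" by (metis mult_eq_0_iff)
  then show False using x unfolding primitive_vec_def by simp
qed

lemma primitive_vec_unit_coord:
  assumes x: "primitive_vec R m x" and "\<pi> \<noteq> 0" "val \<pi> = 1"
  shows "\<exists>i<m. x i \<noteq> 0 \<and> val (x i) = 0"
proof (rule ccontr)
  assume no_unit: "\<not> ?thesis"
  have x_vec: "x \<in> vecs R m" using x unfolding primitive_vec_def by blast
  have "x i / \<pi> \<in> R" for i
  proof (cases "i < m \<and> x i \<noteq> 0")
    case True
    then have "0 \<le> val (x i)" "val (x i) \<noteq> 0"
      using vecs_mem[OF x_vec, of i] no_unit by (auto simp: mem_R_iff)
    then show ?thesis using \<open>\<pi> \<noteq> 0\<close> \<open>val \<pi> = 1\<close> by (intro divide_mem) auto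
  next
    case False
    then show ?thesis using x_vec unfolding vecs_def by auto
  qed
  then have "(\<lambda>i. x i / \<pi>) \<in> vecs R m" using x_vec unfolding vecs_def by auto
  then show False using primitive_vec_not_divisible[OF x] assms(2,3) by simp
qed

end

locale hyperbolic_embedding = discrete_valuation_ring R val
  for R :: "'a::field set" and val +
  fixes n kJ :: nat and G GJ :: "nat \<Rightarrow> nat \<Rightarrow> 'a" and x y :: "nat \<Rightarrow> 'a" and k q :: nat
  assumes two_nonzero: "(2::'a) \<noteq> 0"
    and G_sym: "\<forall>i<n. \<forall>j<n. G i j = G j i"
    and G_mem: "\<And>i j. i < n \<Longrightarrow> j < n \<Longrightarrow> G i j \<in> R"
    and half_diag_mem: "\<And>i. i < n \<Longrightarrow> G i i / 2 \<in> R"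
    and x_vec: "x \<in> vecs R n" and k: "k < n" "x k \<noteq> 0" "val (x k) = 0"
    and y_vec: "y \<in> vecs R kJ" and q: "q < kJ" "y q \<noteq> 0" "val (y q) = 0"
    and Q_eq: "Qf n G x = Qf kJ GJ y"
begin

definition coeff :: "(nat \<Rightarrow> 'a) \<Rightarrow> 'a" where
  "coeff v = v k / x k"

definition rest :: "(nat \<Rightarrow> 'a) \<Rightarrow> nat \<Rightarrow> 'a" where
  "rest v i = v i - coeff v * x i"

definition partner :: "(nat \<Rightarrow> 'a) \<Rightarrow> nat \<Rightarrow> 'a" where
  "partner v i = bil n (half_gram G) (rest v) (unit_vec i) + coeff v * bil n G x (unit_vec i)"

definition emb :: "(nat \<Rightarrow> 'a) \<Rightarrow> nat \<Rightarrow> 'a" where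
  "emb v =
    hyp_vec (n - 1) kJ (\<lambda>j. rest v (skip k j)) (\<lambda>j. partner v (skip k j)) (\<lambda>i. coeff v * y i)"

definition compl :: "(nat \<Rightarrow> 'a) set" where
  "compl =
    {w \<in> vecs R (2 * (n - 1) + kJ). (\<forall>j<n - 1. w (2 * j) = 0) \<and> w (2 * (n - 1) + q) = 0}"

lemma rest_k [simp]: "rest v k = 0"
  using k(2) by (simp add: rest_def coeff_def)

lemma coeff_rest_decomp: "v i = coeff v * x i + rest v i"
  by (simp add: rest_def)

lemma coeff_mem: "v \<in> vecs R n \<Longrightarrow> coeff v \<in> R"
  unfolding coeff_def using vecs_mem[of v n k] k by (intro divide_mem) (auto simp: mem_R_iff)

lemma rest_vecs: "v \<in> vecs R n \<Longrightarrow> rest v \<in> vecs R n"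
  using coeff_mem[of v] x_vec unfolding rest_def vecs_def by auto

lemma half_gram_mem: "i < n \<Longrightarrow> j < n \<Longrightarrow> half_gram G i j \<in> R"
  by (simp add: half_gram_def G_mem half_diag_mem)

lemma partner_mem: "v \<in> vecs R n \<Longrightarrow> i < n \<Longrightarrow> partner v i \<in> R"
  unfolding partner_def
  by (intro add_mem mult_mem bil_mem)
    (auto simp: half_gram_mem G_mem rest_vecs unit_vec_vecs x_vec coeff_mem)

lemma emb_vecs:
  assumes "v \<in> vecs R n"
  shows "emb v \<in> vecs R (2 * (n - 1) + kJ)"
  unfolding emb_def
  using vecs_mem[OF rest_vecs[OF assms]] partner_mem[OF assms] coeff_mem[OF assms]
    vecs_mem[OF y_vec] skip_less[OF k(1)]
  by (intro hyp_vec_vecs) auto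

lemma coeff_add: "coeff (\<lambda>i. v i + w i) = coeff v + coeff w"
  and coeff_scale: "coeff (\<lambda>i. c * v i) = c * coeff v"
  by (simp_all add: coeff_def add_divide_distrib)

lemma rest_add: "rest (\<lambda>i. v i + w i) = (\<lambda>i. rest v i + rest w i)"
  and rest_scale: "rest (\<lambda>i. c * v i) = (\<lambda>i. c * rest v i)"
  by (simp_all add: rest_def coeff_add coeff_scale fun_eq_iff algebra_simps)

lemma partner_add: "partner (\<lambda>i. v i + w i) i = partner v i + partner w i"
  and partner_scale: "partner (\<lambda>i. c * v i) i = c * partner v i"
  by (simp_all add: partner_def rest_add rest_scale coeff_add coeff_scale
      bil_add_left bil_scale_left algebra_simps)

lemma emb_add: "emb (\<lambda>i. v i + w i) = (\<lambda>a. emb v a + emb w a)"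
  and emb_scale: "emb (\<lambda>i. c * v i) = (\<lambda>a. c * emb v a)"
  by (simp_all add: emb_def hyp_vec_def fun_eq_iff rest_add rest_scale partner_add partner_scale
      coeff_add coeff_scale algebra_simps)

lemma emb_zero: "emb (\<lambda>_. 0) = (\<lambda>_. 0)"
  using emb_scale[of 0 "\<lambda>_. 0"] by simp

lemma sum_partner:
  "(\<Sum>i<n. partner v i * u i) = bil n (half_gram G) (rest v) u + coeff v * bil n G x u"
proof -
  have "(\<Sum>i<n. partner v i * u i) =
      (\<Sum>i<n. bil n (half_gram G) (rest v) (unit_vec i) * u i) +
      coeff v * (\<Sum>i<n. bil n G x (unit_vec i) * u i)"
    by (simp add: partner_def distrib_right sum.distrib sum_distrib_left mult.assoc)
  then show ?thesis by (simp flip: bil_eq_sum_unit_vec)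
qed

lemma bil_decomp:
  "bil n G v w =
    coeff v * coeff w * Qf n G x + coeff v * bil n G x (rest w) + coeff w * bil n G x (rest v) +
    bil n G (rest v) (rest w)"
proof -
  have "bil n G v w = bil n G (\<lambda>i. coeff v * x i + rest v i) (\<lambda>i. coeff w * x i + rest w i)"
    by (simp flip: coeff_rest_decomp)
  then show ?thesis
    by (simp only: bil_add_left bil_add_right bil_scale_left bil_scale_right
        bil_commute[OF G_sym, of "rest v" x] Qf_def) (simp add: algebra_simps)
qed

lemma bil_emb: "bil (2 * (n - 1) + kJ) (hyp_sum (n - 1) GJ) (emb v) (emb w) = bil n G v w"
proof -
  let ?U = "half_gram G"
  have "bil (2 * (n - 1) + kJ) (hyp_sum (n - 1) GJ) (emb v) (emb w) =
      (\<Sum>j<n - 1. rest v (skip k j) * partner w (skip k j) + partner v (skip k j) * rest w (skip k j))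
      + bil kJ GJ (\<lambda>i. coeff v * y i) (\<lambda>i. coeff w * y i)" (is "_ = ?pairs + ?J")
    unfolding emb_def by (rule bil_hyp_vec)
  also have "?pairs = (\<Sum>i<n. rest v i * partner w i + partner v i * rest w i)"
    using sum_skip[OF k(1), of "\<lambda>i. rest v i * partner w i + partner v i * rest w i"] by simp
  also have "\<dots> = (\<Sum>i<n. partner w i * rest v i) + (\<Sum>i<n. partner v i * rest w i)"
    by (simp add: sum.distrib mult.commute[of "rest v _"])
  also have "\<dots> = (bil n ?U (rest w) (rest v) + bil n ?U (rest v) (rest w))
      + coeff w * bil n G x (rest v) + coeff v * bil n G x (rest w)"
    by (simp add: sum_partner)
  also have "bil n ?U (rest w) (rest v) + bil n ?U (rest v) (rest w) = bil n G (rest w) (rest v)"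
    by (rule bil_half_gram[OF two_nonzero G_sym])
  also have "?J = coeff v * coeff w * Qf n G x"
    by (simp add: bil_scale_left bil_scale_right Q_eq[unfolded Qf_def] Qf_def)
  finally show ?thesis
    unfolding bil_decomp[of v w] bil_commute[OF G_sym, of "rest w" "rest v"]
    by (simp add: algebra_simps)
qed

lemma emb_even: "j < n - 1 \<Longrightarrow> emb v (2 * j) = rest v (skip k j)"
  and emb_tail: "i < kJ \<Longrightarrow> emb v (2 * (n - 1) + i) = coeff v * y i"
  by (simp_all add: emb_def)

lemma emb_in_compl_imp_zero:
  assumes "v \<in> vecs R n" "emb v \<in> compl"
  shows "v = (\<lambda>_. 0)"
proof
  have "coeff v * y q = 0" using assms(2) emb_tail[OF q(1)] unfolding compl_def by simp
  then have coeff_0: "coeff v = 0" using q(2) by simp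
  have rest_0: "rest v i = 0" if "i < n" for i
  proof (cases "i = k")
    case False
    then have "unskip k i < n - 1" using unskip_less[OF k(1) that] by blast
    then have "emb v (2 * unskip k i) = 0" "emb v (2 * unskip k i) = rest v i"
      using assms(2) emb_even skip_unskip[OF False] unfolding compl_def by auto
    then show ?thesis by simp
  qed simp
  fix i show "v i = 0"
    using coeff_rest_decomp[of v i] coeff_0 rest_0 assms(1) unfolding vecs_def
    by (cases "i < n") auto
qed

lemma ex_diff_emb_mem_compl:
  assumes w: "w \<in> vecs R (2 * (n - 1) + kJ)"
  shows "\<exists>v\<in>vecs R n. (\<lambda>a. w a - emb v a) \<in> compl"
proof -
  define c where "c = w (2 * (n - 1) + q) / y q"
  define v where "v = (\<lambda>i. c * x i + (if i < n \<and> i \<noteq> k then w (2 * unskip k i) else 0))"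
  have "c \<in> R"
    unfolding c_def using q vecs_mem[OF w] by (intro divide_mem) (auto simp: mem_R_iff)
  then have v_vecs: "v \<in> vecs R n"
    using x_vec vecs_mem[OF w] unfolding v_def vecs_def by auto
  have "coeff v = c"
    unfolding coeff_def v_def using k(2) by simp
  then have "rest v i = (if i < n \<and> i \<noteq> k then w (2 * unskip k i) else 0)" for i
    unfolding rest_def v_def by simp
  then have "emb v (2 * j) = w (2 * j)" if "j < n - 1" for j
    using that emb_even skip_less[OF k(1) that] by simp
  moreover have "emb v (2 * (n - 1) + q) = w (2 * (n - 1) + q)"
    using emb_tail[OF q(1)] q(2) \<open>coeff v = c\<close> unfolding c_def by simp
  ultimately have "(\<lambda>a. w a - emb v a) \<in> compl"
    unfolding compl_def using vecs_diff[OF w emb_vecs[OF v_vecs]] by simp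
  then show ?thesis using v_vecs by blast
qed

lemma direct_summand_emb: "direct_summand R (2 * (n - 1) + kJ) (emb ` vecs R n)"
  unfolding direct_summand_def
proof (intro conjI exI)
  show "submod R (2 * (n - 1) + kJ) (emb ` vecs R n)"
    by (rule submod_image[OF emb_vecs emb_add emb_scale])
  show "submod R (2 * (n - 1) + kJ) compl"
    unfolding submod_def compl_def by (auto simp: vecs_add vecs_scale vecs_zero)
  have "(\<lambda>_. 0) \<in> compl"
    unfolding compl_def using vecs_zero by simp
  moreover have "(\<lambda>_. 0) \<in> emb ` vecs R n"
    using emb_zero vecs_zero by (metis image_eqI)
  moreover have "a = (\<lambda>_. 0)" if "a \<in> emb ` vecs R n \<inter> compl" for a
    using that emb_in_compl_imp_zero emb_zero by auto
  ultimately show "emb ` vecs R n \<inter> compl = {\<lambda>_. 0}"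
    by blast
  show "vecs R (2 * (n - 1) + kJ) = {(\<lambda>i. a i + b i) | a b. a \<in> emb ` vecs R n \<and> b \<in> compl}"
  proof (intro equalityI subsetI)
    fix w assume "w \<in> vecs R (2 * (n - 1) + kJ)"
    then obtain v where "v \<in> vecs R n" "(\<lambda>a. w a - emb v a) \<in> compl"
      using ex_diff_emb_mem_compl by blast
    then show "w \<in> {(\<lambda>i. a i + b i) | a b. a \<in> emb ` vecs R n \<and> b \<in> compl}"
      by (intro CollectI exI[of _ "emb v"] exI[of _ "\<lambda>a. w a - emb v a"]) auto
  next
    fix w assume "w \<in> {(\<lambda>i. a i + b i) | a b. a \<in> emb ` vecs R n \<and> b \<in> compl}"
    then obtain v b where "v \<in> vecs R n" "b \<in> compl" "w = (\<lambda>i. emb v i + b i)"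
      by blast
    then show "w \<in> vecs R (2 * (n - 1) + kJ)"
      using vecs_add[OF emb_vecs] unfolding compl_def by blast
  qed
qed

lemma prim_repr_emb: "prim_repr R n G (2 * (n - 1) + kJ) (hyp_sum (n - 1) GJ) emb"
  unfolding prim_repr_def using emb_vecs bil_emb direct_summand_emb by (simp add: emb_add emb_scale)

end

theorem lemma6p6:
  fixes R :: "'a::field set"
    and n kJ :: nat
    and G GJ :: "nat \<Rightarrow> nat \<Rightarrow> 'a"
  assumes "dyadic_local_int_ring R"
    and "n \<ge> 1"
    and "is_lattice R n G"
    and "even_lattice R n G"
    and "is_lattice R kJ GJ"
    and "Qstar R n G \<inter> Qstar R kJ GJ \<noteq> {}"
  shows "\<exists>\<sigma>. prim_repr R n G (2 * (n - 1) + kJ) (hyp_sum (n - 1) GJ) \<sigma>"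
proof -
  obtain val :: "'a \<Rightarrow> int" where val: "is_dvaluation val" "R = {a. a = 0 \<or> 0 \<le> val a}"
    and two: "(2::'a) \<noteq> 0" "val 2 = 1"
    using assms(1) unfolding dyadic_local_int_ring_def by blast
  interpret discrete_valuation_ring R val
    using val by unfold_locales
  obtain x y where x: "primitive_vec R n x" and y: "primitive_vec R kJ y"
    and Q_eq: "Qf n G x = Qf kJ GJ y"
    using assms(6) unfolding Qstar_def by blast
  obtain k where k: "k < n" "x k \<noteq> 0" "val (x k) = 0"
    using primitive_vec_unit_coord[OF x two] by blast
  obtain q where q: "q < kJ" "y q \<noteq> 0" "val (y q) = 0"
    using primitive_vec_unit_coord[OF y two] by blast
  have G_sym: "\<forall>i<n. \<forall>j<n. G i j = G j i"
    using assms(3) unfolding is_lattice_def by blast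
  interpret hyperbolic_embedding R val n kJ G GJ x y k q
    using x y k q Q_eq G_sym two(1) lattice_gram_mem[OF assms(3)]
      even_lattice_half_diag_mem[OF assms(4) two(1)]
    by unfold_locales (simp_all add: primitive_vec_def)
  show ?thesis
    using prim_repr_emb by blast
qed

end
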